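(* Let $\lambda>0$ and $0<\sigma<2\lambda+1$. Then \[ A_\sigma^\lambda\left(\frac{1}{(1-x^2)^{\lambda/2+(1-\sigma)/4}}\right)=\frac{Q_{\sigma,\lambda}}{(1-x^2)^{\lambda/2+(1+\sigma)/4}}, \qquad Q_{\sigma,\lambda}=2^\sigma\frac{\Gamma\!\left(\frac{\lambda}{2}+\frac{1+\sigma}{4}\right)^2}{\Gamma\!\left(\frac{\lambda}{2}+\frac{1-\sigma}{4}\right)^2}, \] in the sense that, writing $g(x)=(1-x^2)^{-\lambda/2-(1-\sigma)/4}$ and $h(x)=(1-x^2)^{-\lambda/2-(1+\sigma)/4}$, for every $n\ge0$ \[ \frac{\Gamma(n+\lambda+\frac{1+\sigma}{2})}{\Gamma(n+\lambda+\frac{1-\sigma}{2})}\,a_n^\lambda(g)=Q_{\sigma,\lambda}\,a_n^\lambda(h). \]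
   Context: For $\lambda>-1/2$ let $d\mu_\lambda(x)=(1-x^2)^{\lambda-1/2}\,dx$ on $(-1,1)$. Let $C_n^\lambda$ be the ultraspherical (Gegenbauer) polynomial of degree $n$ and order $\lambda$, and $c_n^\lambda=C_n^\lambda/\|C_n^\lambda\|_{L^2(d\mu_\lambda)}$. For a function $f$ integrable against polynomials with respect to $d\mu_\lambda$ put $a_n^\lambda(f)=\int_{-1}^1 f(y)c_n^\lambda(y)\,d\mu_\lambda(y)$ (both $g$ and $h$ are integrable with respect to $d\mu_\lambda$ under the hypotheses). The operator $A_\sigma^\lambda$ acts on ultraspherical expansions by multiplying the $n$-th coefficient by $\frac{\Gamma(n+\lambda+\frac{1+\sigma}{2})}{\Gamma(n+\lambda+\frac{1-\sigma}{2})}$, i.e. $A_\sigma^\lambda f=\sum_{n\ge0}\frac{\Gamma(n+\lambda+\frac{1+\sigma}{2})}{\Gamma(n+\lambda+\frac{1-\sigma}{2})}a_n^\lambda(f)c_n^\lambda$. *)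

theory Defs
  imports "HOL-Analysis.Analysis"
begin

definition uweight :: "real \<Rightarrow> real \<Rightarrow> real" where
  "uweight lam x = (1 - x\<^sup>2) powr (lam - 1/2)"

text \<open>Gegenbauer polynomial C_n^lambda via the standard explicit formula
  C_n^lam(x) = sum_{k=0}^{n div 2} (-1)^k (lam)_{n-k} / (k! (n-2k)!) (2x)^(n-2k),
  equivalently the coefficients of the generating function (1-2xt+t^2)^(-lam).\<close>
definition gegenbauer :: "real \<Rightarrow> nat \<Rightarrow> real \<Rightarrow> real" where
  "gegenbauer lam n x =
     (\<Sum>k\<le>n div 2. (-1)^k * pochhammer lam (n - k) / (fact k * fact (n - 2*k))
                     * (2*x)^(n - 2*k))"

definition gegenbauer_norm :: "real \<Rightarrow> nat \<Rightarrow> real" where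
  "gegenbauer_norm lam n =
     sqrt (LBINT y:{-1<..<1}. (gegenbauer lam n y)\<^sup>2 * uweight lam y)"

definition gegenbauer_normalized :: "real \<Rightarrow> nat \<Rightarrow> real \<Rightarrow> real" where
  "gegenbauer_normalized lam n x = gegenbauer lam n x / gegenbauer_norm lam n"

definition ucoeff :: "real \<Rightarrow> nat \<Rightarrow> (real \<Rightarrow> real) \<Rightarrow> real" where
  "ucoeff lam n f =
     (LBINT y:{-1<..<1}. f y * gegenbauer_normalized lam n y * uweight lam y)"

end

theory Submission
  imports Defs
begin

text \<open>
  Both functions are powers \<open>(1 - x\<^sup>2) powr e\<close>, so their coefficients are moments
  \<open>\<integral>(1 - y\<^sup>2) powr b * C\<^sub>n(y) dy\<close> with \<open>b = e + \<lambda> - 1/2\<close>; these vanish for odd \<open>n\<close> by parity.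
  For \<open>n = 2m\<close>, expanding \<open>C\<^sub>2\<^sub>m\<close> into monomials and integrating each one by the Beta
  integral gives an alternating sum that Chu--Vandermonde collapses to
  \<open>\<surd>\<pi> \<Gamma>(b+1) (\<lambda>)\<^sub>m (\<lambda>-b-1/2)\<^sub>m / (m! \<Gamma>(m+b+3/2))\<close>.  Writing \<open>u = b + 1\<close> and
  \<open>v = \<lambda> + 1/2 - u\<close>, Legendre's duplication formula makes this symmetric in \<open>u, v\<close> apart from
  the factor \<open>2\<^sup>2\<^sup>u \<Gamma>(u) / (\<Gamma>(v) \<Gamma>(2m+2u))\<close>.  The two functions of the theorem
  correspond to \<open>u = \<lambda>/2 + (1+\<sigma>)/4\<close>, \<open>v = \<lambda>/2 + (1-\<sigma>)/4\<close> and to the swapped pair.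
\<close>

lemma nn_integral_even_Icc:
  fixes f :: "real \<Rightarrow> ennreal"
  assumes [measurable]: "f \<in> borel_measurable borel" and even: "\<And>x. f (- x) = f x"
  shows "(\<integral>\<^sup>+x. f x * indicator {-c..c} x \<partial>lborel) = 2 * (\<integral>\<^sup>+x. f x * indicator {0..c} x \<partial>lborel)"
proof -
  have reflect: "(\<integral>\<^sup>+x. f x * indicator {-c..0} x \<partial>lborel) = (\<integral>\<^sup>+x. f x * indicator {0..c} x \<partial>lborel)"
    by (subst nn_integral_real_affine[of _ "-1" 0])
       (auto simp: even indicator_def intro!: nn_integral_cong)
  have "(\<integral>\<^sup>+x. f x * indicator {-c..c} x \<partial>lborel) =
        (\<integral>\<^sup>+x. f x * indicator {-c..0} x + f x * indicator {0..c} x \<partial>lborel)"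
    by (intro nn_integral_cong_AE AE_I[of _ _ "{0}"]) (auto simp: indicator_def)
  also have "\<dots> = 2 * (\<integral>\<^sup>+x. f x * indicator {0..c} x \<partial>lborel)"
    by (simp add: nn_integral_add reflect mult_2)
  finally show ?thesis .
qed

lemma square_powr_nat_minus_half_mult:
  fixes x :: real assumes "x > 0"
  shows "(x\<^sup>2) powr (real j - 1/2) * x = x ^ (2*j)"
proof -
  have "x = (x\<^sup>2) powr (1/2)"
    using assms by (simp add: powr_half_sqrt)
  then have "(x\<^sup>2) powr (real j - 1/2) * x = (x\<^sup>2) powr (real j - 1/2) * (x\<^sup>2) powr (1/2)"
    by simp
  also have "\<dots> = (x\<^sup>2) powr (real j - 1/2 + 1/2)"
    by (rule powr_add[symmetric])
  also have "\<dots> = (x\<^sup>2) ^ j"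
    using assms by (simp add: powr_realpow)
  finally show ?thesis
    by (simp add: power_mult)
qed

lemma nn_integral_even_moment_unit_interval:
  fixes a :: real assumes a: "a > -1"
  shows "2 * (\<integral>\<^sup>+x. ennreal ((1 - x\<^sup>2) powr a * x ^ (2*j)) * indicator {0..1} x \<partial>lborel)
           = ennreal (Beta (real j + 1/2) (a + 1))"
proof -
  let ?g = "\<lambda>x::real. (1 - x\<^sup>2) powr a * x ^ (2*j)"
  have "ennreal ((x\<^sup>2) powr (real j - 1/2) * (1 - x\<^sup>2) powr a * (2 * x) * indicator {0..1} x)
        = 2 * (ennreal (?g x) * indicator {0..1} x)" if "x \<noteq> 0" for x
  proof (cases "x \<in> {0..1}")
    case True
    with \<open>x \<noteq> 0\<close> have "x > 0" by auto
    then have "(x\<^sup>2) powr (real j - 1/2) * (1 - x\<^sup>2) powr a * (2 * x) * indicator {0..1} x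
        = 2 * (?g x * indicator {0..1} x)"
      using True square_powr_nat_minus_half_mult[of x j] by (simp add: algebra_simps)
    then show ?thesis
      by (simp only:) (simp add: ennreal_mult ennreal_indicator power_mult)
  qed simp
  with AE_lborel_singleton[of 0]
  have "(\<integral>\<^sup>+x. ennreal ((x\<^sup>2) powr (real j - 1/2) * (1 - x\<^sup>2) powr a * (2 * x) * indicator {0..1} x) \<partial>lborel)
        = 2 * (\<integral>\<^sup>+x. ennreal (?g x) * indicator {0..1} x \<partial>lborel)"
    by (subst nn_integral_cmult[symmetric]) (auto elim!: eventually_mono intro!: nn_integral_cong_AE)
  also have "(\<integral>\<^sup>+x. ennreal ((x\<^sup>2) powr (real j - 1/2) * (1 - x\<^sup>2) powr a * (2 * x) * indicator {0..1} x) \<partial>lborel)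
      = (\<integral>\<^sup>+t. ennreal (t powr (real j - 1/2) * (1 - t) powr a * indicator {0\<^sup>2..1\<^sup>2} t) \<partial>lborel)"
    by (subst nn_integral_substitution[where g = "\<lambda>x. x\<^sup>2" and g' = "\<lambda>x. 2 * x"])
       (auto intro!: derivative_eq_intros continuous_intros simp: set_borel_measurable_def)
  also have "\<dots> = ennreal (Beta (real j + 1/2) (a + 1))"
    using nn_integral_has_integral_lebesgue[OF _ has_integral_Beta_real[of "real j + 1/2" "a + 1"]] a
    by (simp add: mult_ac ennreal_mult' ennreal_indicator)
  finally show ?thesis ..
qed

lemma has_bochner_integral_even_moment:
  fixes a :: real assumes a: "a > -1"
  shows "has_bochner_integral lborel (\<lambda>x. indicator {-1<..<1} x *\<^sub>R ((1 - x\<^sup>2) powr a * x ^ (2*j)))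
           (Beta (real j + 1/2) (a + 1))"
proof (rule has_bochner_integral_nn_integral)
  let ?g = "\<lambda>x::real. (1 - x\<^sup>2) powr a * x ^ (2*j)"
  have "(\<integral>\<^sup>+x. ennreal (indicator {-1<..<1} x *\<^sub>R ?g x) \<partial>lborel) =
        (\<integral>\<^sup>+x. ennreal (?g x) * indicator {-1..1} x \<partial>lborel)"
    by (intro nn_integral_cong) (auto simp: indicator_def)
  also have "\<dots> = ennreal (Beta (real j + 1/2) (a + 1))"
    by (simp add: nn_integral_even_Icc nn_integral_even_moment_unit_interval[OF a])
  finally show "(\<integral>\<^sup>+x. ennreal (indicator {-1<..<1} x *\<^sub>R ?g x) \<partial>lborel) =
                ennreal (Beta (real j + 1/2) (a + 1))" .
  show "0 \<le> Beta (real j + 1/2) (a + 1)"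
    using a by (simp add: Beta_def less_imp_le)
qed (auto simp: power_mult)

lemma Gamma_legendre_duplication_real:
  fixes x :: real assumes "x > 0"
  shows "Gamma x * Gamma (x + 1/2) = 2 powr (1 - 2*x) * sqrt pi * Gamma (2*x)"
proof -
  have "complex_of_real x \<notin> \<int>\<^sub>\<le>\<^sub>0" "complex_of_real (x + 1/2) \<notin> \<int>\<^sub>\<le>\<^sub>0"
    using assms by (auto simp only: of_real_in_nonpos_Ints_iff dest!: nonpos_Ints_nonpos)
  then have "complex_of_real x \<notin> \<int>\<^sub>\<le>\<^sub>0" "complex_of_real x + 1/2 \<notin> \<int>\<^sub>\<le>\<^sub>0"
    by simp_all
  from Gamma_legendre_duplication[OF this]
  have "complex_of_real (Gamma x * Gamma (x + 1/2)) = complex_of_real (2 powr (1 - 2*x) * sqrt pi * Gamma (2*x))"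
    by (simp add: Gamma_complex_of_real[symmetric] powr_def exp_of_real[symmetric] mult.commute)
  then show ?thesis
    by (simp only: of_real_eq_iff)
qed

lemma Gamma_nat_plus_half:
  "Gamma (real j + 1/2) * 4 ^ j = sqrt pi * fact (2*j) / fact j"
proof -
  have "pochhammer (1/2) j = Gamma (real j + 1/2) / sqrt pi"
    using pochhammer_Gamma[of "1/2 :: real" j] nonpos_Ints_nonpos[of "1/2 :: real"]
    by (force simp: Gamma_one_half_real add.commute)
  then show ?thesis
    by (simp add: fact_double power_mult)
qed

lemma four_pow_mult_Beta_nat_plus_half:
  fixes a :: real assumes "a > -1"
  shows "4 ^ j * Beta (real j + 1/2) (a + 1)
           = sqrt pi * fact (2*j) / fact j * Gamma (a + 1) / Gamma (real j + a + 3/2)"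
proof -
  have "4 ^ j * Beta (real j + 1/2) (a + 1)
          = Gamma (real j + 1/2) * 4 ^ j * Gamma (a + 1) / Gamma (real j + a + 3/2)"
    by (simp add: Beta_def add_ac)
  then show ?thesis
    by (simp add: Gamma_nat_plus_half)
qed

lemma sum_alternating_pochhammer_Gamma:
  fixes lam c :: real assumes c: "c > 0"
  shows "(\<Sum>k\<le>m. (-1)^k * pochhammer lam (2*m - k) / (fact k * fact (m - k) * Gamma (real (m - k) + c)))
       = pochhammer lam m * pochhammer (lam - c + 1) m / (fact m * Gamma (real m + c))"
proof -
  define P where "P = pochhammer lam m / (fact m * Gamma (real m + c))"
  have "(-1)^k * pochhammer lam (2*m - k) / (fact k * fact (m - k) * Gamma (real (m - k) + c))
     = P * (of_nat (m choose k) * pochhammer (1 - c - real m) k * pochhammer (lam + real m) (m - k))"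
    if k: "k \<le> m" for k
  proof -
    have pos: "real (m - k) + c > 0"
      using c by simp
    then have "pochhammer (real (m - k) + c) k = Gamma (real m + c) / Gamma (real (m - k) + c)"
      using pochhammer_Gamma[of "real (m - k) + c" k] k nonpos_Ints_nonpos[of "real (m - k) + c"]
      by (force simp: of_nat_diff)
    with Gamma_real_pos[OF pos]
    have G: "Gamma (real m + c) = Gamma (real (m - k) + c) * pochhammer (real (m - k) + c) k"
      by (simp add: field_simps)
    have M: "pochhammer (1 - c - real m) k = (-1)^k * pochhammer (real (m - k) + c) k"
      using pochhammer_minus[of "c + real m - 1" k] k by (simp add: of_nat_diff algebra_simps)
    have B: "real (m choose k) = fact m / (fact k * fact (m - k))"
      using binomial_fact[OF k] by simp
    have L: "pochhammer lam (2*m - k) = pochhammer lam m * pochhammer (lam + real m) (m - k)"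
      using pochhammer_product'[of lam m "m - k"] k by (simp add: mult_2)
    have "Gamma (real (m - k) + c) > 0" "pochhammer (real (m - k) + c) k > 0"
      using pos by (simp_all add: pochhammer_pos)
    then show ?thesis
      unfolding P_def M B L G by (simp add: field_simps)
  qed
  then have "(\<Sum>k\<le>m. (-1)^k * pochhammer lam (2*m - k) / (fact k * fact (m - k) * Gamma (real (m - k) + c)))
      = P * (\<Sum>k\<le>m. of_nat (m choose k) * pochhammer (1 - c - real m) k * pochhammer (lam + real m) (m - k))"
    by (simp add: sum_distrib_left)
  also have "\<dots> = P * pochhammer ((1 - c - real m) + (lam + real m)) m"
    by (simp only: pochhammer_binomial_sum)
  also have "(1 - c - real m) + (lam + real m) = lam - c + 1"
    by simp
  finally show ?thesis
    unfolding P_def by simp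
qed

lemma gegenbauer_minus:
  "gegenbauer lam n (- x) = (-1)^n * gegenbauer lam n x"
  unfolding gegenbauer_def sum_distrib_left
proof (rule sum.cong[OF refl])
  fix k assume "k \<in> {..n div 2}"
  then have "(-1 :: real) ^ (n - 2*k) = (-1)^n"
    by (auto simp: minus_one_power_iff)
  then show "(-1)^k * pochhammer lam (n - k) / (fact k * fact (n - 2*k)) * (2 * - x) ^ (n - 2*k) =
         (-1)^n * ((-1)^k * pochhammer lam (n - k) / (fact k * fact (n - 2*k)) * (2 * x) ^ (n - 2*k))"
    by (simp add: power_minus')
qed

lemma set_integral_odd_zero:
  fixes g :: "real \<Rightarrow> real"
  assumes "\<And>x. g (- x) = - g x"
  shows "(LBINT x:{-c<..<c}. g x) = 0"
proof -
  have "(LBINT x:{-c<..<c}. g x) = (LBINT x:{x. - x \<in> {-c<..<c}}. g (- x))"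
    by (rule set_integral_reflect)
  also have "{x. - x \<in> {-c<..<c}} = {-c<..<c}"
    by auto
  also have "(LBINT x:{-c<..<c}. g (- x)) = - (LBINT x:{-c<..<c}. g x)"
    unfolding set_lebesgue_integral_def assms by simp
  finally show ?thesis
    by simp
qed

definition gegenbauer_moment :: "real \<Rightarrow> nat \<Rightarrow> real \<Rightarrow> real" where
  "gegenbauer_moment lam n b = (LBINT y:{-1<..<1}. (1 - y\<^sup>2) powr b * gegenbauer lam n y)"

lemma gegenbauer_moment_odd: "odd n \<Longrightarrow> gegenbauer_moment lam n b = 0"
  unfolding gegenbauer_moment_def
  by (rule set_integral_odd_zero) (simp add: gegenbauer_minus)

lemma gegenbauer_even:
  "gegenbauer lam (2*m) y =
     (\<Sum>k\<le>m. (-1)^k * pochhammer lam (2*m - k) / (fact k * fact (2*(m - k))) * 4^(m - k) * y^(2*(m - k)))"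
  unfolding gegenbauer_def
proof (rule sum.cong)
  fix k assume "k \<in> {..m}"
  have "2*m - 2*k = 2*(m - k)"
    by simp
  then show "(-1)^k * pochhammer lam (2*m - k) / (fact k * fact (2*m - 2*k)) * (2*y) ^ (2*m - 2*k) =
             (-1)^k * pochhammer lam (2*m - k) / (fact k * fact (2*(m - k))) * 4^(m - k) * y^(2*(m - k))"
    by (simp add: power_mult power_mult_distrib)
qed simp

lemma gegenbauer_moment_even:
  fixes b :: real assumes b: "b > -1"
  shows "gegenbauer_moment lam (2*m) b = sqrt pi * Gamma (b + 1) * pochhammer lam m
           * pochhammer (lam - b - 1/2) m / (fact m * Gamma (real m + b + 3/2))"
proof -
  define cf where "cf k = (-1)^k * pochhammer lam (2*m - k) / (fact k * fact (2*(m - k)))" for k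
  have "indicator {-1<..<1} y *\<^sub>R ((1 - y\<^sup>2) powr b * gegenbauer lam (2*m) y) =
        (\<Sum>k\<le>m. (cf k * 4^(m - k)) * (indicator {-1<..<1} y *\<^sub>R ((1 - y\<^sup>2) powr b * y^(2*(m - k)))))"
    for y :: real
    unfolding gegenbauer_even cf_def sum_distrib_left scaleR_sum_right by (simp add: mult_ac)
  then have "has_bochner_integral lborel
      (\<lambda>y. indicator {-1<..<1} y *\<^sub>R ((1 - y\<^sup>2) powr b * gegenbauer lam (2*m) y))
      (\<Sum>k\<le>m. (cf k * 4^(m - k)) * Beta (real (m - k) + 1/2) (b + 1))"
    by (simp only:) (intro has_bochner_integral_sum has_bochner_integral_mult_right
                           has_bochner_integral_even_moment b)
  then have "gegenbauer_moment lam (2*m) b = (\<Sum>k\<le>m. cf k * (4^(m - k) * Beta (real (m - k) + 1/2) (b + 1)))"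
    unfolding gegenbauer_moment_def set_lebesgue_integral_def
    by (simp add: has_bochner_integral_integral_eq mult.assoc)
  also have "\<dots> = (\<Sum>k\<le>m. sqrt pi * Gamma (b + 1) * ((-1)^k * pochhammer lam (2*m - k)
                    / (fact k * fact (m - k) * Gamma (real (m - k) + b + 3/2))))"
  proof (rule sum.cong[OF refl])
    fix k
    have "Gamma (real (m - k) + b + 3/2) > 0"
      using b by simp
    then show "cf k * (4^(m - k) * Beta (real (m - k) + 1/2) (b + 1)) =
        sqrt pi * Gamma (b + 1) * ((-1)^k * pochhammer lam (2*m - k)
          / (fact k * fact (m - k) * Gamma (real (m - k) + b + 3/2)))"
      unfolding cf_def four_pow_mult_Beta_nat_plus_half[OF b] by (simp add: field_simps)
  qed
  also have "\<dots> = sqrt pi * Gamma (b + 1) * (\<Sum>k\<le>m. (-1)^k * pochhammer lam (2*m - k)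
                    / (fact k * fact (m - k) * Gamma (real (m - k) + (b + 3/2))))"
    by (simp add: sum_distrib_left add.assoc)
  also have "\<dots> = sqrt pi * Gamma (b + 1) * (pochhammer lam m * pochhammer (lam - (b + 3/2) + 1) m
                    / (fact m * Gamma (real m + (b + 3/2))))"
    using b by (subst sum_alternating_pochhammer_Gamma) simp_all
  also have "lam - (b + 3/2) + 1 = lam - b - 1/2"
    by simp
  also have "real m + (b + 3/2) = real m + b + 3/2"
    by simp
  finally show ?thesis
    by (simp only: times_divide_eq_right mult.assoc)
qed

lemma gegenbauer_moment_even_Gamma:
  fixes u v :: real
  assumes u: "u > 0" and v: "v > 0" and uv: "u + v = lam + 1/2"
  shows "gegenbauer_moment lam (2*m) (u - 1) =
           2 powr (2 * real m + 2 * u - 1) * Gamma u / Gamma v * pochhammer lam m / fact m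
           * Gamma (real m + u) * Gamma (real m + v) / Gamma (2 * real m + 2 * u)"
proof -
  have "lam - (u - 1) - 1/2 = v"
    using uv by simp
  then have moment: "gegenbauer_moment lam (2*m) (u - 1) =
      sqrt pi * Gamma u * pochhammer lam m * pochhammer v m / (fact m * Gamma (real m + u + 1/2))"
    using gegenbauer_moment_even[of "u - 1" lam m] u by (simp add: add_ac)
  have poch: "pochhammer v m = Gamma (real m + v) / Gamma v"
    using pochhammer_Gamma[of v m] v nonpos_Ints_nonpos[of v] by (force simp: add.commute)
  have dup: "Gamma (2 * real m + 2 * u) =
      2 powr (2 * real m + 2 * u - 1) / sqrt pi * Gamma (real m + u) * Gamma (real m + u + 1/2)"
    using Gamma_legendre_duplication_real[of "real m + u"] u
    by (simp add: powr_diff field_simps)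
  have "Gamma v > 0" "Gamma (real m + u) > 0" "Gamma (real m + u + 1/2) > 0"
    using u v by simp_all
  then show ?thesis
    unfolding moment poch dup by (simp add: field_simps)
qed

lemma gegenbauer_moment_reflection:
  fixes u v :: real
  assumes u: "u > 0" and v: "v > 0" and uv: "u + v = lam + 1/2"
  shows "Gamma (real n + 2 * u) / Gamma (real n + 2 * v) * gegenbauer_moment lam n (u - 1) =
           2 powr (2 * u - 2 * v) * (Gamma u)\<^sup>2 / (Gamma v)\<^sup>2 * gegenbauer_moment lam n (v - 1)"
proof (cases "even n")
  case True
  then obtain m where n: "n = 2*m"
    by blast
  have "v + u = lam + 1/2"
    using uv by simp
  note moments = gegenbauer_moment_even_Gamma[OF u v uv] gegenbauer_moment_even_Gamma[OF v u this]
  have "2 powr (2 * real m + 2 * u - 1) = 2 powr (2 * u - 2 * v) * 2 powr (2 * real m + 2 * v - 1)"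
    unfolding powr_add[symmetric] by (simp add: algebra_simps)
  moreover have "Gamma (2 * real m + 2 * u) > 0" "Gamma (2 * real m + 2 * v) > 0" "Gamma u > 0" "Gamma v > 0"
    using u v by simp_all
  ultimately show ?thesis
    unfolding n moments by (simp add: field_simps power2_eq_square)
qed (simp add: gegenbauer_moment_odd)

lemma ucoeff_powr:
  "ucoeff lam n (\<lambda>x. (1 - x\<^sup>2) powr e) = gegenbauer_moment lam n (e + lam - 1/2) / gegenbauer_norm lam n"
proof -
  have "ucoeff lam n (\<lambda>x. (1 - x\<^sup>2) powr e) =
      (LBINT y:{-1<..<1}. (1 / gegenbauer_norm lam n) * ((1 - y\<^sup>2) powr (e + lam - 1/2) * gegenbauer lam n y))"
    unfolding ucoeff_def gegenbauer_normalized_def uweight_def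
    by (rule set_lebesgue_integral_cong) (auto simp: add_diff_eq simp flip: powr_add)
  then show ?thesis
    unfolding gegenbauer_moment_def by simp
qed

theorem lemma2:
  fixes lam \<sigma> :: real
  assumes "lam > 0" and "0 < \<sigma>" and "\<sigma> < 2*lam + 1"
  shows "\<forall>n::nat.
    Gamma (real n + lam + (1 + \<sigma>)/2) / Gamma (real n + lam + (1 - \<sigma>)/2)
      * ucoeff lam n (\<lambda>x. (1 - x\<^sup>2) powr (- lam/2 - (1 - \<sigma>)/4))
    = (2 powr \<sigma> * (Gamma (lam/2 + (1 + \<sigma>)/4))\<^sup>2 / (Gamma (lam/2 + (1 - \<sigma>)/4))\<^sup>2)
      * ucoeff lam n (\<lambda>x. (1 - x\<^sup>2) powr (- lam/2 - (1 + \<sigma>)/4))"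
proof -
  define u where "u = lam/2 + (1 + \<sigma>)/4"
  define v where "v = lam/2 + (1 - \<sigma>)/4"
  have "u > 0" "v > 0" "u + v = lam + 1/2"
    using assms by (simp_all add: u_def v_def field_simps)
  note reflection = gegenbauer_moment_reflection[OF this]
  have exps: "- lam/2 - (1 - \<sigma>)/4 + lam - 1/2 = u - 1" "- lam/2 - (1 + \<sigma>)/4 + lam - 1/2 = v - 1"
    and args: "real n + lam + (1 + \<sigma>)/2 = real n + 2 * u" "real n + lam + (1 - \<sigma>)/2 = real n + 2 * v"
    and "2 * u - 2 * v = \<sigma>" for n
    by (simp_all add: u_def v_def field_simps)
  with reflection show ?thesis
    unfolding ucoeff_powr exps args u_def[symmetric] v_def[symmetric]
    by (metis times_divide_eq_right)
qed

end
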